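(* The intersection of all members' viability kernels is not necessarily a viable set for all members. Precisely: there exist $N\ge 2$, a closed constraint set $K\subset\mathbb R^n$, an admissible control set $U$ and continuous-time dynamics $x'=f_i(x,u)$, $u\in U$, $i=1,\dots,N$, such that the intersection $H=\bigcap_{i=1}^N \mathrm{Viab}_i(K)$ is nonempty but $H$ is not a viable set for some member $i$'s system.
   Context: $\mathrm{Viab}_i(K)$ denotes the viability kernel of $K$ for member $i$'s system $x'(t)=f_i(x(t),u(t))$, $u(t)\in U(x(t))$: the set of all $x\in K$ from which there exists an evolution of the system starting at $x$ whose trajectory remains in $K$ for all $t\ge0$. A set $H$ is viable for a system if from every $x\in H$ there exists an evolution of that system starting at $x$ remaining in $H$ for all $t\ge0$. *)

theory Defs
  imports "HOL-Analysis.Analysis"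
begin

text \<open>An evolution of the controlled system x'(t) = f(x(t),u(t)), u(t) in U(x(t)),
  starting at x0: an absolutely continuous (Caratheodory) solution on [0,oo), i.e.
  x(t) = x0 + integral over [0,t] of f(x(s),u(s)) ds with an absolutely integrable integrand,
  for some control u with u(t) in U(x(t)) for all t >= 0.\<close>
definition evolution ::
  "('a::euclidean_space \<Rightarrow> 'c \<Rightarrow> 'a) \<Rightarrow> ('a \<Rightarrow> 'c set) \<Rightarrow> 'a \<Rightarrow> (real \<Rightarrow> 'a) \<Rightarrow> bool" where
  "evolution f U x0 x \<longleftrightarrow> x 0 = x0 \<and>
     (\<exists>u::real \<Rightarrow> 'c. (\<forall>t\<ge>0. u t \<in> U (x t)) \<and>
        (\<forall>t\<ge>0. (\<lambda>s. f (x s) (u s)) absolutely_integrable_on {0..t} \<and>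
                ((\<lambda>s. f (x s) (u s)) has_integral (x t - x0)) {0..t}))"

definition viab ::
  "('a::euclidean_space \<Rightarrow> 'c \<Rightarrow> 'a) \<Rightarrow> ('a \<Rightarrow> 'c set) \<Rightarrow> 'a set \<Rightarrow> 'a set" where
  "viab f U K = {x \<in> K. \<exists>\<xi>. evolution f U x \<xi> \<and> (\<forall>t\<ge>0. \<xi> t \<in> K)}"

definition viable_set ::
  "('a::euclidean_space \<Rightarrow> 'c \<Rightarrow> 'a) \<Rightarrow> ('a \<Rightarrow> 'c set) \<Rightarrow> 'a set \<Rightarrow> bool" where
  "viable_set f U H \<longleftrightarrow> (\<forall>x\<in>H. \<exists>\<xi>. evolution f U x \<xi> \<and> (\<forall>t\<ge>0. \<xi> t \<in> H))"

end

theory Submission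
  imports Defs
begin

text \<open>Take two members in the plane driven by the constant fields e1 and e2 and let K be
  the union of the half-planes x1 \<le> 0 and x2 \<le> 0. Moving along e1 stays in K exactly
  when x2 \<le> 0, and along e2 exactly when x1 \<le> 0, so the intersection of the two
  viability kernels is the closed negative quadrant. It contains the origin, but the
  first member leaves the quadrant from there.\<close>

lemma evolution_constant_fieldD:
  assumes "evolution (\<lambda>x u. v) U x0 \<xi>" "t \<ge> 0"
  shows "\<xi> t = x0 + t *\<^sub>R v"
proof -
  have "((\<lambda>s. v) has_integral (\<xi> t - x0)) {0..t}"
    using assms unfolding evolution_def by auto
  moreover have "((\<lambda>s. v) has_integral (t *\<^sub>R v)) {0..t}"
    using has_integral_const_real[of v 0 t] assms(2) by simp
  ultimately have "\<xi> t - x0 = t *\<^sub>R v"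
    by (rule has_integral_unique)
  then show ?thesis
    by (simp add: algebra_simps)
qed

lemma evolution_constant_field:
  assumes "\<forall>x. U x \<noteq> {}"
  shows "evolution (\<lambda>x u. v) U x0 (\<lambda>t. x0 + t *\<^sub>R v)"
  unfolding evolution_def
proof (intro conjI exI[of _ "\<lambda>t. SOME c. c \<in> U (x0 + t *\<^sub>R v)"] allI impI)
  fix t :: real
  assume "t \<ge> 0"
  show "(SOME c. c \<in> U (x0 + t *\<^sub>R v)) \<in> U (x0 + t *\<^sub>R v)"
    using assms by (simp add: some_in_eq)
  show "(\<lambda>s. v) absolutely_integrable_on {0..t}"
    by simp
  show "((\<lambda>s. v) has_integral (x0 + t *\<^sub>R v - x0)) {0..t}"
    using has_integral_const_real[of v 0 t] \<open>t \<ge> 0\<close> by simp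
qed simp

lemma viab_constant_field:
  assumes "\<forall>x. U x \<noteq> {}"
  shows "viab (\<lambda>x u. v) U K = {x. \<forall>t\<ge>0. x + t *\<^sub>R v \<in> K}"
proof (intro set_eqI iffI)
  fix x
  assume "x \<in> viab (\<lambda>x u. v) U K"
  then obtain \<xi> where \<xi>: "evolution (\<lambda>x u. v) U x \<xi>" and \<xi>_in_K: "\<forall>t\<ge>0. \<xi> t \<in> K"
    unfolding viab_def by blast
  have "x + t *\<^sub>R v \<in> K" if "t \<ge> 0" for t
    using \<xi>_in_K that evolution_constant_fieldD[OF \<xi> that] by metis
  then show "x \<in> {x. \<forall>t\<ge>0. x + t *\<^sub>R v \<in> K}"
    by blast
next
  fix x
  assume "x \<in> {x. \<forall>t\<ge>0. x + t *\<^sub>R v \<in> K}"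
  then have ray: "\<forall>t\<ge>0. x + t *\<^sub>R v \<in> K"
    by simp
  then have "x \<in> K"
    by (metis order_refl scale_zero_left add_0_right)
  with ray show "x \<in> viab (\<lambda>x u. v) U K"
    unfolding viab_def
    using evolution_constant_field[OF assms] by (intro CollectI conjI exI[of _ "\<lambda>t. x + t *\<^sub>R v"])
qed

lemma viable_set_constant_field:
  assumes "\<forall>x. U x \<noteq> {}"
  shows "viable_set (\<lambda>x u. v) U H \<longleftrightarrow> (\<forall>x\<in>H. \<forall>t\<ge>0. x + t *\<^sub>R v \<in> H)"
proof (intro iffI ballI allI impI)
  fix x t
  assume "viable_set (\<lambda>x u. v) U H" "x \<in> H" "t \<ge> (0::real)"
  then obtain \<xi> where \<xi>: "evolution (\<lambda>x u. v) U x \<xi>" and \<xi>_in_H: "\<forall>t\<ge>0. \<xi> t \<in> H"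
    unfolding viable_set_def by blast
  show "x + t *\<^sub>R v \<in> H"
    using \<xi>_in_H \<open>t \<ge> 0\<close> evolution_constant_fieldD[OF \<xi> \<open>t \<ge> 0\<close>] by metis
next
  assume rays: "\<forall>x\<in>H. \<forall>t\<ge>0. x + t *\<^sub>R v \<in> H"
  show "viable_set (\<lambda>x u. v) U H"
    unfolding viable_set_def
  proof
    fix x
    assume "x \<in> H"
    then show "\<exists>\<xi>. evolution (\<lambda>x u. v) U x \<xi> \<and> (\<forall>t\<ge>0. \<xi> t \<in> H)"
      using rays evolution_constant_field[OF assms] by (intro exI[of _ "\<lambda>t. x + t *\<^sub>R v"] conjI) auto
  qed
qed

lemma viab_axis_union_halfspaces:
  fixes U :: "real^'n \<Rightarrow> 'c set"
  assumes "\<forall>x. U x \<noteq> {}" and "i \<noteq> j"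
  shows "viab (\<lambda>x u. axis i 1) U ({x. x$i \<le> 0} \<union> {x. x$j \<le> 0}) = {x. x$j \<le> 0}"
proof -
  have axis_j: "axis i (1::real) $ j = 0"
    using assms(2) by (simp add: axis_def)
  have "(\<forall>t\<ge>0. x + t *\<^sub>R axis i 1 \<in> {x. x$i \<le> 0} \<union> {x. x$j \<le> 0}) \<longleftrightarrow> x$j \<le> 0"
    for x :: "real^'n"
  proof
    assume "\<forall>t\<ge>0. x + t *\<^sub>R axis i 1 \<in> {x. x$i \<le> 0} \<union> {x. x$j \<le> 0}"
    from this[rule_format, of "\<bar>x$i\<bar> + 1"] have "x$i + (\<bar>x$i\<bar> + 1) \<le> 0 \<or> x$j \<le> 0"
      by (simp add: axis_j)
    then show "x$j \<le> 0"
      by linarith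
  qed (simp add: axis_j)
  then show ?thesis
    unfolding viab_constant_field[OF assms(1)] by blast
qed

theorem proposition2:
  shows "\<exists>(N::nat) (K::(real^2) set) (U::real^2 \<Rightarrow> (real^2) set)
            (f::nat \<Rightarrow> real^2 \<Rightarrow> real^2 \<Rightarrow> real^2).
           N \<ge> 2 \<and> closed K \<and> (\<forall>x. U x \<noteq> {}) \<and>
           (\<Inter>i\<in>{1..N}. viab (f i) U K) \<noteq> {} \<and>
           (\<exists>i\<in>{1..N}. \<not> viable_set (f i) U (\<Inter>j\<in>{1..N}. viab (f j) U K))"
proof -
  define K :: "(real^2) set" where "K = {x. x$1 \<le> 0} \<union> {x. x$2 \<le> 0}"
  define U :: "real^2 \<Rightarrow> (real^2) set" where "U = (\<lambda>_. {0})"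
  define f :: "nat \<Rightarrow> real^2 \<Rightarrow> real^2 \<Rightarrow> real^2" where
    "f = (\<lambda>i x u. axis (if i = 1 then 1 else 2) 1)"
  define Q :: "(real^2) set" where "Q = {x. x$1 \<le> 0 \<and> x$2 \<le> 0}"
  have U_nonempty: "\<forall>x. U x \<noteq> {}"
    by (simp add: U_def)
  have f1: "f 1 = (\<lambda>x u. axis 1 1)" and f2: "f 2 = (\<lambda>x u. axis 2 1)"
    by (simp_all add: f_def)
  have "viab (f 1) U K = {x. x$2 \<le> 0}" "viab (f 2) U K = {x. x$1 \<le> 0}"
    unfolding f1 f2 K_def
    using viab_axis_union_halfspaces[OF U_nonempty, of 1 2]
      viab_axis_union_halfspaces[OF U_nonempty, of 2 1]
    by (simp_all add: Un_commute)
  moreover have "{1..2::nat} = {1, 2}"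
    by auto
  ultimately have H: "(\<Inter>j\<in>{1..2}. viab (f j) U K) = Q"
    unfolding Q_def by auto
  have "0 \<in> Q" "0 + 1 *\<^sub>R axis 1 1 \<notin> Q"
    unfolding Q_def by simp_all
  then have "\<not> viable_set (f 1) U Q"
    unfolding f1 viable_set_constant_field[OF U_nonempty] by (meson zero_le_one)
  then have "\<exists>i\<in>{1..2}. \<not> viable_set (f i) U (\<Inter>j\<in>{1..2}. viab (f j) U K)"
    unfolding H by (intro bexI[of _ 1]) simp_all
  moreover have "(\<Inter>j\<in>{1..2}. viab (f j) U K) \<noteq> {}"
    unfolding H using \<open>0 \<in> Q\<close> by blast
  moreover have "closed K"
    unfolding K_def by (intro closed_Un closed_halfspace_component_le_cart)
  ultimately show ?thesis
    using U_nonempty by (intro exI[of _ "2::nat"] exI[of _ K] exI[of _ U] exI[of _ f] conjI order_refl)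
qed

end
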